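(* Let $P=\{p_1,\dots,p_n\}\subset\mathbb{R}^2$ be in general position and let $f\in\mathbb{R}^{\binom n2}$ be arbitrary. Then $X_f(P)$ is bounded.
   Context: General position: no three points collinear. Infinitesimal motions $v\in(\mathbb{R}^2)^n$ are normalized by $v_1^1=v_1^2=v_2^1=0$ (with $p_1,p_2$ having different $y$-coordinates). $\bar X_f(P)$ is the set of normalized $v$ with $\langle p_i-p_j,v_i-v_j\rangle\ge f_{ij}$ for all $i<j$, and $X_f(P)$ is the subset of $\bar X_f(P)$ on which these inequalities hold with equality for every pair $ij$ that is an edge of the boundary of the convex hull of $P$. *)

theory Defs
  imports "HOL-Analysis.Analysis"
begin

text \<open>Point configurations P = {p_1,...,p_n} in the plane are given as maps
  p :: nat => real^2 on the index set {1..n}; coordinate 1 is x, coordinate 2 is y.\<close>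

definition general_position :: "nat \<Rightarrow> (nat \<Rightarrow> real^2) \<Rightarrow> bool" where
  "general_position n p \<longleftrightarrow>
     inj_on p {1..n} \<and>
     (\<forall>i\<in>{1..n}. \<forall>j\<in>{1..n}. \<forall>k\<in>{1..n}.
        i \<noteq> j \<and> j \<noteq> k \<and> i \<noteq> k \<longrightarrow> \<not> collinear {p i, p j, p k})"

definition hull_edge :: "nat \<Rightarrow> (nat \<Rightarrow> real^2) \<Rightarrow> nat \<Rightarrow> nat \<Rightarrow> bool" where
  "hull_edge n p i j \<longleftrightarrow> i \<in> {1..n} \<and> j \<in> {1..n} \<and> i \<noteq> j \<and>
     closed_segment (p i) (p j) face_of convex hull (p ` {1..n})"

definition normalized_motion :: "nat \<Rightarrow> (nat \<Rightarrow> real^2) \<Rightarrow> bool" where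
  "normalized_motion n v \<longleftrightarrow> (\<forall>i. i \<notin> {1..n} \<longrightarrow> v i = 0) \<and>
     v 1 $ 1 = 0 \<and> v 1 $ 2 = 0 \<and> v 2 $ 1 = 0"

definition Xbar :: "nat \<Rightarrow> (nat \<Rightarrow> real^2) \<Rightarrow> (nat \<Rightarrow> nat \<Rightarrow> real) \<Rightarrow> (nat \<Rightarrow> real^2) set" where
  "Xbar n p f = {v. normalized_motion n v \<and>
     (\<forall>i\<in>{1..n}. \<forall>j\<in>{1..n}. i < j \<longrightarrow> (p i - p j) \<bullet> (v i - v j) \<ge> f i j)}"

definition X :: "nat \<Rightarrow> (nat \<Rightarrow> real^2) \<Rightarrow> (nat \<Rightarrow> nat \<Rightarrow> real) \<Rightarrow> (nat \<Rightarrow> real^2) set" where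
  "X n p f = {v \<in> Xbar n p f.
     \<forall>i j. i < j \<and> hull_edge n p i j \<longrightarrow> (p i - p j) \<bullet> (v i - v j) = f i j}"

definition motions_bounded :: "nat \<Rightarrow> (nat \<Rightarrow> real^2) set \<Rightarrow> bool" where
  "motions_bounded n S \<longleftrightarrow> (\<exists>B. \<forall>v\<in>S. \<forall>i\<in>{1..n}. norm (v i) \<le> B)"

end

theory Submission
  imports Defs
begin

(* The stretch of a pair ij under a motion v is (p_i - p_j) . (v_i - v_j). Motions in X_f(P)
   have prescribed stretch on the hull edges and stretch at least f_ij on all other pairs, while
   trivial motions (translations plus infinitesimal rotations) have zero stretch everywhere.

   Around the hull polygon the angular velocities of consecutive hull edges telescope. At each
   hull vertex the difference of the angular velocities of its two edges is an affine function of
   the stretch of the diagonal joining its neighbours, with a coefficient of fixed sign. Hence a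
   positive combination of these diagonal stretches is constant on X_f(P), so each of them is
   bounded above as well as below. Each hull triangle (a vertex and its two successors) then
   moves like a trivial motion up to a bounded error; consecutive triangles share an edge, so the
   whole hull does. An interior point sees hull vertices beyond it in every direction, and its
   stretches to them are bounded below, which bounds its deviation as well. Finally the
   normalization v_1 = 0, v_2^1 = 0 bounds the trivial motion itself. *)

section \<open>Planar vector algebra\<close>

definition cross2 :: "real^2 \<Rightarrow> real^2 \<Rightarrow> real" where
  "cross2 x y = x$1 * y$2 - x$2 * y$1"

definition perp :: "real^2 \<Rightarrow> real^2" where
  "perp x = vector [- x$2, x$1]"

lemma inner_real2: "x \<bullet> (y::real^2) = x$1 * y$1 + x$2 * y$2"
  by (simp add: inner_vec_def sum_2)

lemma vec2_eq_iff: "(x::real^2) = y \<longleftrightarrow> x$1 = y$1 \<and> x$2 = y$2"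
  by (simp add: vec_eq_iff forall_2)

lemma perp_nth [simp]: "perp x $ 1 = - x$2" "perp x $ 2 = x$1"
  by (simp_all add: perp_def)

lemma inner_perp_self [simp]: "x \<bullet> perp x = 0"
  by (simp add: inner_real2)

lemma norm_perp [simp]: "norm (perp x) = norm x"
  by (simp add: norm_eq_sqrt_inner inner_real2)

lemma perp_diff: "perp (x - y) = perp x - perp y"
  by (simp add: vec2_eq_iff)

lemma cross2_orthogonal_decomposition:
  "(d \<bullet> d) *\<^sub>R w = (d \<bullet> w) *\<^sub>R d + cross2 d w *\<^sub>R perp d"
  by (simp add: vec2_eq_iff inner_real2 cross2_def algebra_simps)

lemma inner_nonpos_in_cone:
  assumes "cross2 a b > 0" "cross2 b d \<ge> 0" "cross2 a d \<ge> 0" "a \<bullet> u \<ge> 0" "b \<bullet> u \<le> 0"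
  shows "d \<bullet> u \<le> 0"
proof -
  have eq: "cross2 a b *\<^sub>R d = cross2 a d *\<^sub>R b - cross2 b d *\<^sub>R a"
    by (simp add: vec2_eq_iff cross2_def algebra_simps)
  have "cross2 a b * (d \<bullet> u) = (cross2 a b *\<^sub>R d) \<bullet> u" by simp
  also have "\<dots> = cross2 a d * (b \<bullet> u) - cross2 b d * (a \<bullet> u)"
    unfolding eq by (simp add: inner_diff_left)
  also have "\<dots> \<le> 0"
    using mult_nonneg_nonpos[OF assms(3,5)] mult_nonneg_nonneg[OF assms(2,4)] by linarith
  finally show ?thesis using assms(1) by (simp add: mult_le_0_iff)
qed

lemma cross2_mult_inner_if_orthogonal:
  assumes "x \<bullet> u = 0"
  shows "cross2 x y * (u \<bullet> u) = cross2 x u * (y \<bullet> u)"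
proof -
  have "cross2 x y * (u \<bullet> u) - cross2 x u * (y \<bullet> u) = (x \<bullet> u) * (y$2 * u$1 - y$1 * u$2)"
    by (simp add: cross2_def inner_real2 algebra_simps)
  then show ?thesis using assms by simp
qed

lemma collinear_if_cross2_eq_0:
  assumes "cross2 (b - a) (c - a) = 0"
  shows "collinear {a, b, c}"
proof -
  let ?x = "b - a" and ?y = "c - a"
  have "?x = 0 \<or> (\<exists>t. ?y = t *\<^sub>R ?x)"
  proof (cases "?x = 0")
    case False
    then have nz: "?x \<bullet> ?x \<noteq> 0" by simp
    have "?y = inverse (?x \<bullet> ?x) *\<^sub>R ((?x \<bullet> ?x) *\<^sub>R ?y)" using nz by simp
    also have "\<dots> = inverse (?x \<bullet> ?x) *\<^sub>R ((?x \<bullet> ?y) *\<^sub>R ?x)"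
      using cross2_orthogonal_decomposition[of ?x ?y] assms by simp
    finally show ?thesis by auto
  qed simp
  then have "collinear {0, ?x, ?y}" by (auto simp: collinear_lemma)
  then have "collinear {b, a, c}" by (subst collinear_3) simp
  then show ?thesis by (simp add: insert_commute)
qed

lemma norm_le_by_two_directions:
  assumes "cross2 d1 d2 \<noteq> 0"
  shows "norm w \<le> (norm d2 * \<bar>d1 \<bullet> w\<bar> + norm d1 * \<bar>d2 \<bullet> w\<bar>) / \<bar>cross2 d1 d2\<bar>"
proof -
  have "cross2 d1 d2 *\<^sub>R w = (d2 \<bullet> w) *\<^sub>R perp d1 - (d1 \<bullet> w) *\<^sub>R perp d2"
    by (simp add: vec2_eq_iff inner_real2 cross2_def algebra_simps)
  then have "\<bar>cross2 d1 d2\<bar> * norm w = norm ((d2 \<bullet> w) *\<^sub>R perp d1 - (d1 \<bullet> w) *\<^sub>R perp d2)"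
    by (simp flip: norm_scaleR)
  also have "\<dots> \<le> norm d2 * \<bar>d1 \<bullet> w\<bar> + norm d1 * \<bar>d2 \<bullet> w\<bar>"
    by (rule order_trans[OF norm_triangle_ineq4]) (simp add: mult.commute)
  finally show ?thesis using assms by (simp add: pos_le_divide_eq mult.commute)
qed

lemma ex_strict_support_by_perturbation:
  fixes x :: "'k \<Rightarrow> 'a::real_inner"
  assumes "finite K" and "\<forall>k\<in>K. x k \<bullet> u < 0 \<or> (x k \<bullet> u = 0 \<and> x k \<bullet> w < 0)"
  shows "\<exists>u'. \<forall>k\<in>K. x k \<bullet> u' < 0"
proof -
  have "\<forall>\<^sub>F e in at_right 0. \<forall>k\<in>K. x k \<bullet> (u + e *\<^sub>R w) < 0"
  proof (intro eventually_ball_finite[OF assms(1)] ballI)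
    fix k assume "k \<in> K"
    have expand: "x k \<bullet> (u + e *\<^sub>R w) = x k \<bullet> u + e * (x k \<bullet> w)" for e
      by (simp add: inner_add_right)
    consider "x k \<bullet> u < 0" | "x k \<bullet> u = 0" "x k \<bullet> w < 0" using assms(2) \<open>k \<in> K\<close> by blast
    then show "\<forall>\<^sub>F e in at_right 0. x k \<bullet> (u + e *\<^sub>R w) < 0"
    proof cases
      case 1
      have "((\<lambda>e. x k \<bullet> u + e * (x k \<bullet> w)) \<longlongrightarrow> x k \<bullet> u + 0 * (x k \<bullet> w)) (at_right 0)"
        by (intro tendsto_intros)
      then show ?thesis unfolding expand using 1 by (auto dest: order_tendstoD(2))
    next
      case 2
      show ?thesis unfolding expand using eventually_at_right_less[of 0]
        by eventually_elim (use 2 in \<open>simp add: mult_pos_neg\<close>)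
    qed
  qed
  then show ?thesis using eventually_happens'[OF trivial_limit_at_right_real] by blast
qed

lemma norm_bound_by_positive_spanning_set:
  fixes d :: "'k \<Rightarrow> 'a::euclidean_space"
  assumes "finite K" and spanning: "\<And>u. u \<noteq> 0 \<Longrightarrow> \<exists>k\<in>K. d k \<bullet> u > 0"
  shows "\<exists>\<delta>>0. \<forall>w. \<delta> * norm w \<le> (\<Sum>k\<in>K. max 0 (d k \<bullet> w))"
proof -
  define \<phi> where "\<phi> w = (\<Sum>k\<in>K. max 0 (d k \<bullet> w))" for w
  have "continuous_on (sphere 0 1) \<phi>" unfolding \<phi>_def by (intro continuous_intros)
  moreover have "sphere (0::'a) 1 \<noteq> {}" by simp
  ultimately obtain u0 where u0: "u0 \<in> sphere 0 1" and min: "\<And>u. u \<in> sphere 0 1 \<Longrightarrow> \<phi> u0 \<le> \<phi> u"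
    using continuous_attains_inf[OF compact_sphere] by metis
  have "u0 \<noteq> 0" using u0 by auto
  then obtain k where k: "k \<in> K" "d k \<bullet> u0 > 0" using spanning by blast
  have "max 0 (d k \<bullet> u0) \<le> \<phi> u0"
    unfolding \<phi>_def using assms(1) k(1) by (intro member_le_sum) auto
  then have pos: "\<phi> u0 > 0" using k(2) by linarith
  have "\<phi> u0 * norm w \<le> \<phi> w" for w
  proof (cases "w = 0")
    case False
    define u where "u = w /\<^sub>R norm w"
    have "d k \<bullet> w = norm w * (d k \<bullet> u)" for k
      using False by (simp add: u_def)
    then have "max 0 (d k \<bullet> w) = norm w * max 0 (d k \<bullet> u)" for k
      by (simp add: max_mult_distrib_left)
    then have "\<phi> w = norm w * \<phi> u"
      unfolding \<phi>_def sum_distrib_left by simp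
    moreover have "\<phi> u0 \<le> \<phi> u" using min False by (simp add: u_def)
    ultimately show ?thesis by (simp add: mult.commute mult_left_mono)
  qed (simp add: \<phi>_def)
  then show ?thesis using pos unfolding \<phi>_def by blast
qed

lemma cross2_angle_identity:
  assumes "a \<noteq> 0" "b \<noteq> 0"
  shows "cross2 a b * (cross2 b b' / (b \<bullet> b) - cross2 a a' / (a \<bullet> a)) =
    (a - b) \<bullet> (a' - b') + ((a \<bullet> b) / (a \<bullet> a) - 1) * (a \<bullet> a') + ((a \<bullet> b) / (b \<bullet> b) - 1) * (b \<bullet> b')"
proof -
  have "a \<bullet> a \<noteq> 0" "b \<bullet> b \<noteq> 0" using assms by auto
  moreover have "cross2 a b * (cross2 b b' * (a \<bullet> a) - cross2 a a' * (b \<bullet> b)) =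
      ((a - b) \<bullet> (a' - b')) * (a \<bullet> a) * (b \<bullet> b) + ((a \<bullet> b) - (a \<bullet> a)) * (a \<bullet> a') * (b \<bullet> b)
      + ((a \<bullet> b) - (b \<bullet> b)) * (b \<bullet> b') * (a \<bullet> a)"
    by (simp add: inner_real2 cross2_def algebra_simps)
  ultimately show ?thesis by (simp add: field_simps)
qed

text \<open>Trivial infinitesimal motions: translation by a plus rotation with angular velocity s.\<close>
definition rigid_motion :: "real^2 \<Rightarrow> real \<Rightarrow> real^2 \<Rightarrow> real^2" where
  "rigid_motion a s x = a + s *\<^sub>R perp x"

lemma rigid_motion_diff: "rigid_motion a s x - rigid_motion a s y = s *\<^sub>R perp (x - y)"
  by (simp add: rigid_motion_def perp_diff algebra_simps)

lemma rigid_motion_sub: "rigid_motion a s x - rigid_motion a' s' x = rigid_motion (a - a') (s - s') x"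
  by (simp add: rigid_motion_def algebra_simps)

lemma norm_rigid_motion_le_shift:
  "norm (rigid_motion a s z) \<le> norm (rigid_motion a s x) + \<bar>s\<bar> * norm (z - x)"
proof -
  have "rigid_motion a s z = rigid_motion a s x + s *\<^sub>R perp (z - x)"
    using rigid_motion_diff[of a s z x] by (simp add: algebra_simps)
  then show ?thesis
    using norm_triangle_ineq[of "rigid_motion a s x" "s *\<^sub>R perp (z - x)"] by simp
qed

lemma abs_rotation_le:
  "\<bar>s\<bar> * norm (x - y) \<le> norm (rigid_motion a s x) + norm (rigid_motion a s y)"
  using norm_triangle_ineq4[of "rigid_motion a s x" "rigid_motion a s y"]
  by (simp add: rigid_motion_diff)

lemma abs_rotation_le_first_coordinate:
  "\<bar>s\<bar> * \<bar>x $ 2 - y $ 2\<bar> \<le> \<bar>rigid_motion a s x $ 1\<bar> + \<bar>rigid_motion a s y $ 1\<bar>"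
proof -
  have "rigid_motion a s y $ 1 - rigid_motion a s x $ 1 = s * (x $ 2 - y $ 2)"
    by (simp add: rigid_motion_def algebra_simps)
  then have "\<bar>s\<bar> * \<bar>x $ 2 - y $ 2\<bar> = \<bar>rigid_motion a s y $ 1 - rigid_motion a s x $ 1\<bar>"
    by (simp add: abs_mult)
  also have "\<dots> \<le> \<bar>rigid_motion a s x $ 1\<bar> + \<bar>rigid_motion a s y $ 1\<bar>"
    by (rule order_trans[OF abs_triangle_ineq4]) simp
  finally show ?thesis .
qed

lemma norm_rigid_motion_le:
  assumes "finite Z" "z \<in> Z" "x \<noteq> y"
    and "norm (rigid_motion a s x) \<le> c" "norm (rigid_motion a s y) \<le> c"
  shows "norm (rigid_motion a s z) \<le> c + 2 * c / norm (x - y) * (\<Sum>z\<in>Z. norm (z - x))"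
proof -
  have "0 \<le> c" using assms(4) norm_ge_zero order_trans by blast
  have "\<bar>s\<bar> \<le> 2 * c / norm (x - y)"
    using abs_rotation_le[of s x y a] assms(3-5) by (simp add: le_divide_eq)
  moreover have "norm (z - x) \<le> (\<Sum>z\<in>Z. norm (z - x))"
    using assms(1,2) by (intro member_le_sum) auto
  ultimately have "\<bar>s\<bar> * norm (z - x) \<le> 2 * c / norm (x - y) * (\<Sum>z\<in>Z. norm (z - x))"
    using \<open>0 \<le> c\<close> by (intro mult_mono) auto
  then show ?thesis using norm_rigid_motion_le_shift[of a s z x] assms(4) by linarith
qed

lemma hull_edge_commute: "hull_edge n p i j \<longleftrightarrow> hull_edge n p j i"
  unfolding hull_edge_def by (auto simp: closed_segment_commute)

section \<open>Hull vertices and the hull cycle\<close>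

locale planar_config =
  fixes n :: nat and p :: "nat \<Rightarrow> real^2"
  assumes two_le_n: "2 \<le> n" and general_position: "general_position n p"
begin

abbreviation I :: "nat set" where "I \<equiv> {1..n}"

lemma p_neq: "i \<in> I \<Longrightarrow> j \<in> I \<Longrightarrow> i \<noteq> j \<Longrightarrow> p i \<noteq> p j"
  using general_position unfolding general_position_def inj_on_def by blast

lemma cross2_p_nonzero:
  assumes "i \<in> I" "j \<in> I" "k \<in> I" "i \<noteq> j" "j \<noteq> k" "i \<noteq> k"
  shows "cross2 (p j - p i) (p k - p i) \<noteq> 0"
  using collinear_if_cross2_eq_0 general_position assms unfolding general_position_def by blast

lemma not_three_on_line:
  assumes "i \<in> I" "j \<in> I" "k \<in> I" "i \<noteq> j" "j \<noteq> k" "i \<noteq> k" "u \<noteq> 0"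
    and "(p j - p i) \<bullet> u = 0" "(p k - p i) \<bullet> u = 0"
  shows False
proof -
  have "cross2 (p j - p i) (p k - p i) * (u \<bullet> u) = 0"
    using cross2_mult_inner_if_orthogonal[OF assms(8)] assms(9) by simp
  then show False using cross2_p_nonzero[OF assms(1-6)] assms(7) by simp
qed

definition ccw_edge :: "nat \<Rightarrow> nat \<Rightarrow> bool" where
  "ccw_edge i j \<longleftrightarrow> i \<in> I \<and> j \<in> I \<and> i \<noteq> j \<and>
     (\<forall>k\<in>I - {i, j}. cross2 (p j - p i) (p k - p i) > 0)"

definition vertices :: "nat set" where
  "vertices = {i\<in>I. \<exists>u. \<forall>k\<in>I - {i}. (p k - p i) \<bullet> u < 0}"

lemma vertices_subset: "vertices \<subseteq> I"
  unfolding vertices_def by auto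

lemma finite_vertices: "finite vertices"
  using vertices_subset finite_subset by blast

lemma ccw_edge_hull_edge:
  assumes "ccw_edge i j"
  shows "hull_edge n p i j"
proof -
  have ij: "i \<in> I" "j \<in> I" "i \<noteq> j"
    and left: "\<And>k. k \<in> I - {i, j} \<Longrightarrow> cross2 (p j - p i) (p k - p i) > 0"
    using assms unfolding ccw_edge_def by auto
  define a where "a = perp (p j - p i)"
  have a_inner: "a \<bullet> x - a \<bullet> p i = cross2 (p j - p i) (x - p i)" for x
    by (simp add: a_def inner_real2 cross2_def algebra_simps)
  have "affine hull {p i, p j} \<subseteq> {x. a \<bullet> x = a \<bullet> p i}"
    using a_inner[of "p j"] by (intro hull_minimal) (auto simp: affine_hyperplane cross2_def)
  moreover have "a \<bullet> p k > a \<bullet> p i" if "k \<in> I - {i, j}" for k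
    using a_inner[of "p k"] left[OF that] by simp
  then have "convex hull (p ` I - {p i, p j}) \<subseteq> {x. a \<bullet> x > a \<bullet> p i}"
    by (intro hull_minimal) (fastforce, rule convex_halfspace_gt)
  ultimately have "affine hull {p i, p j} \<inter> convex hull (p ` I - {p i, p j}) = {}"
    by fastforce
  then have "convex hull {p i, p j} face_of convex hull (p ` I)"
    using ij by (intro face_of_convex_hulls) auto
  then show ?thesis
    using ij unfolding hull_edge_def by (simp add: segment_convex_hull)
qed

lemma ccw_edge_vertices:
  assumes "ccw_edge i j"
  shows "i \<in> vertices" "j \<in> vertices"
proof -
  define d where "d = p j - p i"
  have ij: "i \<in> I" "j \<in> I" "i \<noteq> j"
    and left: "\<And>k. k \<in> I - {i, j} \<Longrightarrow> cross2 d (p k - p i) > 0"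
    using assms unfolding ccw_edge_def d_def by auto
  have "d \<noteq> 0" using p_neq[OF ij] by (simp add: d_def)
  then have dd: "d \<bullet> d > 0" by simp
  have outward: "(p k - p l) \<bullet> (- perp d) < 0" if "k \<in> I - {i, j}" "l \<in> {i, j}" for k l
  proof -
    have "(p k - p l) \<bullet> perp d = cross2 d (p k - p i)"
      using that by (auto simp: d_def inner_real2 cross2_def algebra_simps)
    then show ?thesis using left[OF that(1)] by simp
  qed
  have "\<forall>k\<in>I - {i}. (p k - p i) \<bullet> (- perp d) < 0 \<or>
      ((p k - p i) \<bullet> (- perp d) = 0 \<and> (p k - p i) \<bullet> (- d) < 0)"
  proof
    fix k assume "k \<in> I - {i}"
    moreover have "p j - p i = d" by (simp add: d_def)
    ultimately show "(p k - p i) \<bullet> (- perp d) < 0 \<or> ((p k - p i) \<bullet> (- perp d) = 0 \<and> (p k - p i) \<bullet> (- d) < 0)"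
      using outward[of k i] dd by (cases "k = j") auto
  qed
  then have "\<exists>u. \<forall>k\<in>I - {i}. (p k - p i) \<bullet> u < 0"
    by (rule ex_strict_support_by_perturbation[rotated]) simp
  then show "i \<in> vertices" using ij unfolding vertices_def by blast
  have "\<forall>k\<in>I - {j}. (p k - p j) \<bullet> (- perp d) < 0 \<or>
      ((p k - p j) \<bullet> (- perp d) = 0 \<and> (p k - p j) \<bullet> d < 0)"
  proof
    fix k assume "k \<in> I - {j}"
    moreover have "p i - p j = - d" by (simp add: d_def)
    ultimately show "(p k - p j) \<bullet> (- perp d) < 0 \<or> ((p k - p j) \<bullet> (- perp d) = 0 \<and> (p k - p j) \<bullet> d < 0)"
      using outward[of k j] dd by (cases "k = i") auto
  qed
  then have "\<exists>u. \<forall>k\<in>I - {j}. (p k - p j) \<bullet> u < 0"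
    by (rule ex_strict_support_by_perturbation[rotated]) simp
  then show "j \<in> vertices" using ij unfolding vertices_def by blast
qed

lemma ccw_edge_unique_source:
  assumes "ccw_edge i j" "ccw_edge i' j"
  shows "i = i'"
proof (rule ccontr)
  assume "i \<noteq> i'"
  then have "cross2 (p j - p i) (p i' - p i) > 0" "cross2 (p j - p i') (p i - p i') > 0"
    using assms unfolding ccw_edge_def by auto
  moreover have "cross2 (p j - p i') (p i - p i') = - cross2 (p j - p i) (p i' - p i)"
    by (simp add: cross2_def algebra_simps)
  ultimately show False by simp
qed

lemma ccw_edge_asym:
  assumes "ccw_edge i j" "ccw_edge j i" and "k \<in> I - {i, j}"
  shows False
proof -
  have "cross2 (p j - p i) (p k - p i) > 0" "cross2 (p i - p j) (p k - p j) > 0"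
    using assms unfolding ccw_edge_def by auto
  moreover have "cross2 (p i - p j) (p k - p j) = - cross2 (p j - p i) (p k - p i)"
    by (simp add: cross2_def algebra_simps)
  ultimately show False by simp
qed

lemma ex_ccw_edge:
  assumes "i \<in> vertices"
  shows "\<exists>j. ccw_edge i j"
proof -
  obtain u where i: "i \<in> I" and u: "\<And>k. k \<in> I - {i} \<Longrightarrow> (p k - p i) \<bullet> u < 0"
    using assms unfolding vertices_def by blast
  define e where "e = - u"
  define slope where "slope k = ((p k - p i) \<bullet> perp e) / ((p k - p i) \<bullet> e)" for k
  have "(if i = 1 then 2 else 1) \<in> I - {i}" using two_le_n by auto
  then have "I - {i} \<noteq> {}" by blast
  then obtain j where j: "j \<in> I - {i}" and j_min: "\<And>k. k \<in> I - {i} \<Longrightarrow> slope j \<le> slope k"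
    using ex_is_arg_min_if_finite[of "I - {i}" slope] unfolding is_arg_min_def by force
  have e_pos: "(p k - p i) \<bullet> e > 0" if "k \<in> I - {i}" for k
    using u[OF that] by (simp add: e_def)
  have "e \<bullet> e > 0" using e_pos[OF j] by auto
  have "cross2 (p j - p i) (p k - p i) > 0" if k: "k \<in> I - {i, j}" for k
  proof -
    let ?x = "p j - p i" and ?y = "p k - p i"
    have "(?x \<bullet> perp e) * (?y \<bullet> e) \<le> (?y \<bullet> perp e) * (?x \<bullet> e)"
      using j_min[of k] e_pos[of j] e_pos[of k] j k
      by (simp add: slope_def divide_le_eq le_divide_eq field_simps)
    moreover have "cross2 ?x ?y * (e \<bullet> e) = (?x \<bullet> e) * (?y \<bullet> perp e) - (?x \<bullet> perp e) * (?y \<bullet> e)"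
      by (simp add: inner_real2 cross2_def algebra_simps)
    ultimately have "cross2 ?x ?y * (e \<bullet> e) \<ge> 0" by (simp add: mult.commute)
    then have "cross2 ?x ?y \<ge> 0" using \<open>e \<bullet> e > 0\<close> by (simp add: zero_le_mult_iff)
    moreover have "cross2 ?x ?y \<noteq> 0" using cross2_p_nonzero[of i j k] i j k by auto
    ultimately show ?thesis by simp
  qed
  then have "ccw_edge i j" using i j unfolding ccw_edge_def by auto
  then show ?thesis by blast
qed

lemma maximizer_in_vertices:
  assumes "u \<noteq> 0" "m \<in> I" and max: "\<And>k. k \<in> I \<Longrightarrow> p k \<bullet> u \<le> p m \<bullet> u"
  shows "m \<in> vertices"
proof -
  have below: "(p k - p m) \<bullet> u \<le> 0" if "k \<in> I" for k
    using max[OF that] by (simp add: inner_diff_left)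
  obtain w where w: "\<And>k. k \<in> I - {m} \<Longrightarrow> (p k - p m) \<bullet> u = 0 \<Longrightarrow> (p k - p m) \<bullet> w < 0"
  proof (cases "\<exists>m'\<in>I - {m}. (p m' - p m) \<bullet> u = 0")
    case True
    then obtain m' where m': "m' \<in> I - {m}" "(p m' - p m) \<bullet> u = 0" by blast
    have "(p k - p m) \<bullet> (p m - p m') < 0" if "k \<in> I - {m}" "(p k - p m) \<bullet> u = 0" for k
    proof -
      have "k = m'" using not_three_on_line[of m m' k u] assms(1,2) m' that by blast
      moreover have "p m' - p m \<noteq> 0" using p_neq[of m' m] assms(2) m'(1) by simp
      moreover have "p m - p m' = - (p m' - p m)" by simp
      ultimately show ?thesis by (simp only: inner_minus_right) simp
    qed
    then show ?thesis using that by blast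
  qed (use that in blast)
  have "\<forall>k\<in>I - {m}. (p k - p m) \<bullet> u < 0 \<or> ((p k - p m) \<bullet> u = 0 \<and> (p k - p m) \<bullet> w < 0)"
  proof
    fix k assume "k \<in> I - {m}"
    then show "(p k - p m) \<bullet> u < 0 \<or> ((p k - p m) \<bullet> u = 0 \<and> (p k - p m) \<bullet> w < 0)"
      using below[of k] w[of k] by fastforce
  qed
  then have "\<exists>u'. \<forall>k\<in>I - {m}. (p k - p m) \<bullet> u' < 0"
    by (rule ex_strict_support_by_perturbation[rotated]) simp
  then show ?thesis using assms(2) unfolding vertices_def by blast
qed

lemma ex_vertex_maximizer:
  assumes "u \<noteq> 0"
  obtains m where "m \<in> vertices"
    and "\<And>k. k \<in> I \<Longrightarrow> p k \<bullet> u \<le> p m \<bullet> u"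
    and "\<And>k. k \<in> I - vertices \<Longrightarrow> p k \<bullet> u < p m \<bullet> u"
proof -
  have "I \<noteq> {}" using two_le_n by auto
  then obtain m where m: "m \<in> I" and max: "\<And>k. k \<in> I \<Longrightarrow> p k \<bullet> u \<le> p m \<bullet> u"
    using ex_is_arg_min_if_finite[of I "\<lambda>k. - (p k \<bullet> u)"] unfolding is_arg_min_def by force
  have "p k \<bullet> u < p m \<bullet> u" if "k \<in> I - vertices" for k
  proof -
    have "p k \<bullet> u \<noteq> p m \<bullet> u"
      using maximizer_in_vertices[OF assms, of k] max that by force
    then show ?thesis using max that by force
  qed
  then show ?thesis using that maximizer_in_vertices[OF assms m max] max by blast
qed

lemma vertices_nonempty: "vertices \<noteq> {}"
proof -
  have "(vector [1, 0] :: real^2) \<noteq> 0" by (simp add: vec2_eq_iff)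
  then show ?thesis using ex_vertex_maximizer by blast
qed

definition succ :: "nat \<Rightarrow> nat" where
  "succ i = (SOME j. ccw_edge i j)"

lemma ccw_edge_succ: "i \<in> vertices \<Longrightarrow> ccw_edge i (succ i)"
  unfolding succ_def using ex_ccw_edge by (rule someI_ex)

lemma succ_in_vertices: "i \<in> vertices \<Longrightarrow> succ i \<in> vertices"
  using ccw_edge_succ ccw_edge_vertices by blast

lemma succ_neq: "i \<in> vertices \<Longrightarrow> succ i \<noteq> i"
  using ccw_edge_succ ccw_edge_def by metis

lemma inj_on_succ: "inj_on succ vertices"
  unfolding inj_on_def using ccw_edge_succ ccw_edge_unique_source by metis

lemma bij_betw_succ: "bij_betw succ vertices vertices"
  using endo_inj_surj[OF finite_vertices _ inj_on_succ] succ_in_vertices inj_on_succ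
  unfolding bij_betw_def by blast

lemma succ_succ_neq:
  assumes "3 \<le> n" "i \<in> vertices"
  shows "succ (succ i) \<noteq> i"
proof
  assume two_cycle: "succ (succ i) = i"
  define k :: nat where "k = (if 1 \<notin> {i, succ i} then 1 else if 2 \<notin> {i, succ i} then 2 else 3)"
  have "k \<in> I - {i, succ i}" using assms(1) unfolding k_def by auto
  then show False
    using ccw_edge_asym ccw_edge_succ[OF assms(2)] ccw_edge_succ[OF succ_in_vertices[OF assms(2)]]
    by (simp add: two_cycle)
qed

definition succ_orbit :: "nat \<Rightarrow> nat set" where
  "succ_orbit i = range (\<lambda>l. (succ ^^ l) i)"

lemma succ_orbit_subset: "i \<in> vertices \<Longrightarrow> succ_orbit i \<subseteq> vertices"
proof -
  assume "i \<in> vertices"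
  then have "(succ ^^ l) i \<in> vertices" for l
    by (induction l) (auto simp: succ_in_vertices)
  then show ?thesis unfolding succ_orbit_def by auto
qed

lemma succ_image_succ_orbit:
  assumes "i \<in> vertices"
  shows "succ ` succ_orbit i = succ_orbit i"
proof (rule endo_inj_surj)
  show "finite (succ_orbit i)" "inj_on succ (succ_orbit i)"
    using succ_orbit_subset[OF assms] finite_vertices inj_on_succ
    by (auto intro: finite_subset inj_on_subset)
  show "succ ` succ_orbit i \<subseteq> succ_orbit i"
    unfolding succ_orbit_def by (auto intro: range_eqI[of _ _ "Suc _"])
qed

text \<open>The hull vertices form a single cycle: if a vertex e with strict supporting direction u
  missed the cycle through i0, take the cycle vertex m maximal in direction u. Lying left of both
  cycle edges at m puts p e - p m in the cone spanned by them, on which u is nonpositive.\<close>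
lemma succ_orbit_eq_vertices:
  assumes i0: "i0 \<in> vertices"
  shows "succ_orbit i0 = vertices"
proof (rule ccontr)
  let ?O = "succ_orbit i0"
  assume "?O \<noteq> vertices"
  then obtain e where e: "e \<in> vertices" "e \<notin> ?O" using succ_orbit_subset[OF i0] by blast
  then obtain u where u: "\<And>k. k \<in> I - {e} \<Longrightarrow> (p k - p e) \<bullet> u < 0"
    unfolding vertices_def by blast
  have "i0 \<in> ?O" unfolding succ_orbit_def by (auto intro: range_eqI[of _ _ 0])
  moreover have "finite ?O" using succ_orbit_subset[OF i0] finite_vertices finite_subset by blast
  ultimately obtain m where m: "m \<in> ?O" and m_max: "\<And>k. k \<in> ?O \<Longrightarrow> p k \<bullet> u \<le> p m \<bullet> u"
    using ex_is_arg_min_if_finite[of ?O "\<lambda>k. - (p k \<bullet> u)"] unfolding is_arg_min_def by force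
  obtain h where h: "h \<in> ?O" "succ h = m" using succ_image_succ_orbit[OF i0] m by force
  define j where "j = succ m"
  have j: "j \<in> ?O" using succ_image_succ_orbit[OF i0] m unfolding j_def by blast
  have vert: "h \<in> vertices" "m \<in> vertices" using succ_orbit_subset[OF i0] h m by auto
  have edges: "ccw_edge h m" "ccw_edge m j"
    using ccw_edge_succ[OF vert(1)] ccw_edge_succ[OF vert(2)] h(2) by (auto simp: j_def)
  have "e \<in> I" "e \<notin> {h, m, j}" using e h m j vertices_subset by auto
  then have e_left: "cross2 (p m - p h) (p e - p h) > 0" "cross2 (p j - p m) (p e - p m) > 0"
    using edges unfolding ccw_edge_def by auto
  have "m \<in> I" "m \<noteq> e" using vert vertices_subset e m by auto
  then have e_above: "(p e - p m) \<bullet> u > 0" using u[of m] by (simp add: inner_diff_left)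
  show False
  proof (cases "h = j")
    case True
    then show False using ccw_edge_asym edges \<open>e \<in> I\<close> \<open>e \<notin> {h, m, j}\<close> by blast
  next
    case False
    have "h \<in> I" "h \<noteq> m" using vert vertices_subset succ_neq[OF vert(1)] h(2) by auto
    then have h_left: "cross2 (p j - p m) (p h - p m) > 0"
      using edges(2) False unfolding ccw_edge_def by auto
    have "cross2 (p m - p h) (p j - p m) > 0" "cross2 (p j - p m) (p e - p m) \<ge> 0"
      "cross2 (p m - p h) (p e - p m) \<ge> 0"
      using h_left e_left by (simp_all add: cross2_def algebra_simps)
    moreover have "(p m - p h) \<bullet> u \<ge> 0" "(p j - p m) \<bullet> u \<le> 0"
      using m_max[OF h(1)] m_max[OF j] by (simp_all add: inner_diff_left)
    ultimately have "(p e - p m) \<bullet> u \<le> 0" by (rule inner_nonpos_in_cone)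
    then show False using e_above by simp
  qed
qed

section \<open>Motions rigid up to bounded error\<close>

definition stretch :: "(nat \<Rightarrow> real^2) \<Rightarrow> nat \<Rightarrow> nat \<Rightarrow> real" where
  "stretch v i j = (p i - p j) \<bullet> (v i - v j)"

lemma stretch_commute: "stretch v i j = stretch v j i"
  unfolding stretch_def by (metis inner_minus_left inner_minus_right minus_diff_eq)

lemma stretch_sub_rigid_motion:
  "stretch (\<lambda>i. v i - rigid_motion a s (p i)) i j = stretch v i j"
proof -
  have diff: "(v i - rigid_motion a s (p i)) - (v j - rigid_motion a s (p j))
      = (v i - v j) - s *\<^sub>R perp (p i - p j)"
    by (simp add: rigid_motion_def perp_diff algebra_simps)
  show ?thesis unfolding stretch_def diff by (simp add: inner_diff_right)
qed

definition near_rigid :: "(nat \<Rightarrow> real^2) set \<Rightarrow> nat set \<Rightarrow> bool" where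
  "near_rigid S R \<longleftrightarrow> (\<exists>B. \<forall>v\<in>S. \<exists>a s. \<forall>i\<in>R. norm (v i - rigid_motion a s (p i)) \<le> B)"

lemma near_rigid_mono: "near_rigid S R \<Longrightarrow> R' \<subseteq> R \<Longrightarrow> near_rigid S R'"
  unfolding near_rigid_def by (meson subsetD)

lemma near_rigidE:
  assumes "near_rigid S R"
  obtains B where "0 \<le> B" "\<And>v. v \<in> S \<Longrightarrow> \<exists>a s. \<forall>i\<in>R. norm (v i - rigid_motion a s (p i)) \<le> B"
proof -
  obtain B where "\<forall>v\<in>S. \<exists>a s. \<forall>i\<in>R. norm (v i - rigid_motion a s (p i)) \<le> B"
    using assms unfolding near_rigid_def by blast
  then have "\<forall>v\<in>S. \<exists>a s. \<forall>i\<in>R. norm (v i - rigid_motion a s (p i)) \<le> max B 0"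
    by (meson max.coboundedI1)
  then show ?thesis using that[of "max B 0"] by auto
qed

lemma near_rigid_pair:
  assumes "i \<in> I" "j \<in> I" "i \<noteq> j" and bounded: "\<And>v. v \<in> S \<Longrightarrow> \<bar>stretch v i j\<bar> \<le> C"
  shows "near_rigid S {i, j}"
proof -
  define d where "d = p j - p i"
  have "d \<noteq> 0" using p_neq assms(1-3) by (simp add: d_def)
  then have dd: "d \<bullet> d \<noteq> 0" by simp
  have "\<exists>a s. \<forall>x\<in>{i, j}. norm (v x - rigid_motion a s (p x)) \<le> C / norm d" if v: "v \<in> S" for v
  proof -
    define w where "w = v j - v i"
    define s where "s = cross2 d w / (d \<bullet> d)"
    define a where "a = v i - s *\<^sub>R perp (p i)"
    have at_i: "v i - rigid_motion a s (p i) = 0" by (simp add: a_def rigid_motion_def)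
    have "v j - rigid_motion a s (p j) = w - s *\<^sub>R perp d"
      using rigid_motion_diff[of a s "p j" "p i"] at_i by (simp add: w_def d_def algebra_simps)
    also have "\<dots> = ((d \<bullet> w) / (d \<bullet> d)) *\<^sub>R d"
      using cross2_orthogonal_decomposition[of d w] dd
      by (simp add: s_def vec2_eq_iff field_simps)
    moreover have "d \<bullet> w = stretch v i j"
      using stretch_commute[of v i j] unfolding stretch_def d_def w_def by simp
    ultimately have "norm (v j - rigid_motion a s (p j)) = \<bar>stretch v i j\<bar> / norm d"
      by (simp add: power2_norm_eq_inner[symmetric] power2_eq_square)
    also have "\<dots> \<le> C / norm d" using bounded[OF v] by (simp add: divide_right_mono)
    finally show ?thesis
      using at_i bounded[OF v] by (intro exI[of _ a] exI[of _ s]) auto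
  qed
  then show ?thesis unfolding near_rigid_def by blast
qed

lemma inner_sub_rigid_motion:
  "(p k - p l) \<bullet> (v k - rigid_motion a s (p k))
     = stretch v k l + (p k - p l) \<bullet> (v l - rigid_motion a s (p l))"
  using stretch_sub_rigid_motion[of v a s k l] unfolding stretch_def by (simp add: inner_diff_right)

lemma inner_sub_rigid_motion_le:
  assumes "norm (v l - rigid_motion a s (p l)) \<le> B"
  shows "\<bar>(p k - p l) \<bullet> (v k - rigid_motion a s (p k))\<bar> \<le> \<bar>stretch v k l\<bar> + norm (p k - p l) * B"
proof -
  have "\<bar>(p k - p l) \<bullet> (v l - rigid_motion a s (p l))\<bar> \<le> norm (p k - p l) * B"
    using Cauchy_Schwarz_ineq2[of "p k - p l" "v l - rigid_motion a s (p l)"] assms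
    by (meson mult_left_mono norm_ge_zero order_trans)
  then show ?thesis unfolding inner_sub_rigid_motion by linarith
qed

lemma near_rigid_insert:
  assumes "near_rigid S R" "i \<in> R" "j \<in> R"
    and "i \<in> I" "j \<in> I" "k \<in> I" "i \<noteq> j" "j \<noteq> k" "i \<noteq> k"
    and bounded: "\<And>v. v \<in> S \<Longrightarrow> \<bar>stretch v k i\<bar> \<le> C \<and> \<bar>stretch v k j\<bar> \<le> C"
  shows "near_rigid S (insert k R)"
proof -
  obtain B where "0 \<le> B" and B: "\<And>v. v \<in> S \<Longrightarrow> \<exists>a s. \<forall>x\<in>R. norm (v x - rigid_motion a s (p x)) \<le> B"
    using near_rigidE[OF assms(1)] by blast
  define d1 d2 where "d1 = p k - p i" and "d2 = p k - p j"
  have "cross2 d1 d2 = cross2 (p i - p k) (p j - p k)"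
    by (simp add: d1_def d2_def cross2_def algebra_simps)
  then have nonzero: "cross2 d1 d2 \<noteq> 0" using cross2_p_nonzero[of k i j] assms(4-9) by auto
  define Bk where "Bk = (norm d2 * (C + norm d1 * B) + norm d1 * (C + norm d2 * B)) / \<bar>cross2 d1 d2\<bar>"
  have "\<exists>a s. \<forall>x\<in>insert k R. norm (v x - rigid_motion a s (p x)) \<le> max B Bk" if v: "v \<in> S" for v
  proof -
    obtain a s where as: "\<forall>x\<in>R. norm (v x - rigid_motion a s (p x)) \<le> B" using B[OF v] by blast
    let ?Wk = "v k - rigid_motion a s (p k)"
    have "\<bar>d1 \<bullet> ?Wk\<bar> \<le> C + norm d1 * B" "\<bar>d2 \<bullet> ?Wk\<bar> \<le> C + norm d2 * B"
      using inner_sub_rigid_motion_le[of v _ a s B k] as assms(2,3) bounded[OF v]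
      unfolding d1_def d2_def by (smt (verit))+
    then have "norm ?Wk \<le> Bk"
      using norm_le_by_two_directions[OF nonzero, of ?Wk] unfolding Bk_def
      by (smt (verit) divide_right_mono mult_left_mono norm_ge_zero abs_ge_zero)
    then show ?thesis using as by (intro exI[of _ a] exI[of _ s]) force
  qed
  then show ?thesis unfolding near_rigid_def by blast
qed

lemma near_rigid_Un:
  assumes "near_rigid S R1" "near_rigid S R2" "finite R2"
    and "i \<in> R1 \<inter> R2" "j \<in> R1 \<inter> R2" "p i \<noteq> p j"
  shows "near_rigid S (R1 \<union> R2)"
proof -
  obtain B1 where "0 \<le> B1" and B1: "\<And>v. v \<in> S \<Longrightarrow> \<exists>a s. \<forall>x\<in>R1. norm (v x - rigid_motion a s (p x)) \<le> B1"
    using near_rigidE[OF assms(1)] by blast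
  obtain B2 where "0 \<le> B2" and B2: "\<And>v. v \<in> S \<Longrightarrow> \<exists>a s. \<forall>x\<in>R2. norm (v x - rigid_motion a s (p x)) \<le> B2"
    using near_rigidE[OF assms(2)] by blast
  define c where "c = B1 + B2"
  define BT where "BT = c + 2 * c / norm (p i - p j) * (\<Sum>z\<in>p ` R2. norm (z - p i))"
  have "\<exists>a s. \<forall>x\<in>R1 \<union> R2. norm (v x - rigid_motion a s (p x)) \<le> B1 + B2 + BT" if v: "v \<in> S" for v
  proof -
    obtain a1 s1 where as1: "\<forall>x\<in>R1. norm (v x - rigid_motion a1 s1 (p x)) \<le> B1" using B1[OF v] by blast
    obtain a2 s2 where as2: "\<forall>x\<in>R2. norm (v x - rigid_motion a2 s2 (p x)) \<le> B2" using B2[OF v] by blast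
    define T where "T = rigid_motion (a2 - a1) (s2 - s1)"
    have split: "v x - rigid_motion a1 s1 (p x) = (v x - rigid_motion a2 s2 (p x)) + T (p x)" for x
      using rigid_motion_sub[of a2 s2 "p x" a1 s1] by (simp add: T_def algebra_simps)
    have "norm (T (p x)) \<le> c" if "x \<in> R1 \<inter> R2" for x
    proof -
      have "T (p x) = (v x - rigid_motion a1 s1 (p x)) - (v x - rigid_motion a2 s2 (p x))"
        using split[of x] by simp
      then have "norm (T (p x)) \<le> norm (v x - rigid_motion a1 s1 (p x)) + norm (v x - rigid_motion a2 s2 (p x))"
        by (simp only: norm_triangle_ineq4)
      then show ?thesis using as1 as2 that unfolding c_def by fastforce
    qed
    then have T_bound: "norm (T (p x)) \<le> BT" if "x \<in> R2" for x
      unfolding T_def BT_def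
      using norm_rigid_motion_le[OF finite_imageI[OF assms(3)] imageI[OF that] assms(6)] assms(4,5)
      by blast
    have "norm (v x - rigid_motion a1 s1 (p x)) \<le> B1 + B2 + BT" if "x \<in> R1 \<union> R2" for x
    proof (cases "x \<in> R1")
      case True
      moreover have "0 \<le> BT" using T_bound[of i] assms(4) norm_ge_zero order_trans by blast
      ultimately show ?thesis using as1 \<open>0 \<le> B2\<close> by fastforce
    next
      case False
      then have "x \<in> R2" using that by blast
      have "norm (v x - rigid_motion a1 s1 (p x)) \<le> norm (v x - rigid_motion a2 s2 (p x)) + norm (T (p x))"
        unfolding split[of x] by (rule norm_triangle_ineq)
      also have "\<dots> \<le> B2 + BT" using as2 T_bound \<open>x \<in> R2\<close> by (simp add: add_mono)
      finally show ?thesis using \<open>0 \<le> B1\<close> by linarith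
    qed
    then show ?thesis by blast
  qed
  then show ?thesis unfolding near_rigid_def by blast
qed

lemma near_rigid_insert_enclosed:
  assumes "near_rigid S R" "finite R"
    and enclosed: "\<And>u. u \<noteq> 0 \<Longrightarrow> \<exists>i\<in>R. (p i - p q) \<bullet> u > 0"
    and lower: "\<And>v i. v \<in> S \<Longrightarrow> i \<in> R \<Longrightarrow> c i \<le> stretch v q i"
  shows "near_rigid S (insert q R)"
proof -
  obtain B where "0 \<le> B" and B: "\<And>v. v \<in> S \<Longrightarrow> \<exists>a s. \<forall>x\<in>R. norm (v x - rigid_motion a s (p x)) \<le> B"
    using near_rigidE[OF assms(1)] by blast
  obtain \<delta> where "\<delta> > 0" and \<delta>: "\<And>w. \<delta> * norm w \<le> (\<Sum>i\<in>R. max 0 ((p i - p q) \<bullet> w))"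
    using norm_bound_by_positive_spanning_set[OF assms(2) enclosed] by blast
  define K where "K = (\<Sum>i\<in>R. \<bar>c i\<bar> + norm (p i - p q) * B)"
  have "\<exists>a s. \<forall>x\<in>insert q R. norm (v x - rigid_motion a s (p x)) \<le> max B (K / \<delta>)" if v: "v \<in> S" for v
  proof -
    obtain a s where as: "\<forall>x\<in>R. norm (v x - rigid_motion a s (p x)) \<le> B" using B[OF v] by blast
    let ?Wq = "v q - rigid_motion a s (p q)"
    have term_bound: "max 0 ((p i - p q) \<bullet> ?Wq) \<le> \<bar>c i\<bar> + norm (p i - p q) * B" if "i \<in> R" for i
    proof -
      let ?Wi = "v i - rigid_motion a s (p i)"
      have "(p i - p q) \<bullet> ?Wq = - stretch v q i - (p q - p i) \<bullet> ?Wi"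
        using inner_sub_rigid_motion[of q i v a s] by (simp add: inner_diff_left)
      moreover have "- ((p q - p i) \<bullet> ?Wi) \<le> norm (p q - p i) * norm ?Wi"
        using Cauchy_Schwarz_ineq2[of "p q - p i" ?Wi] by linarith
      moreover have "norm (p q - p i) * norm ?Wi \<le> norm (p i - p q) * B"
        using as that by (simp add: norm_minus_commute mult_left_mono)
      moreover have "0 \<le> norm (p i - p q) * B" using \<open>0 \<le> B\<close> by simp
      ultimately show ?thesis using lower[OF v that] by simp
    qed
    have "\<delta> * norm ?Wq \<le> (\<Sum>i\<in>R. max 0 ((p i - p q) \<bullet> ?Wq))" by (rule \<delta>)
    also have "\<dots> \<le> K" unfolding K_def by (rule sum_mono) (rule term_bound)
    finally have "\<delta> * norm ?Wq \<le> K" .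
    then have "norm ?Wq \<le> K / \<delta>" using \<open>\<delta> > 0\<close> by (simp add: le_divide_eq mult.commute)
    then show ?thesis using as by (intro exI[of _ a] exI[of _ s]) force
  qed
  then show ?thesis unfolding near_rigid_def by blast
qed

lemma motions_bounded_if_near_rigid:
  assumes "near_rigid S I" and normalized: "\<And>v. v \<in> S \<Longrightarrow> normalized_motion n v"
    and "p 1 $ 2 \<noteq> p 2 $ 2"
  shows "motions_bounded n S"
proof -
  obtain B where "0 \<le> B" and B: "\<And>v. v \<in> S \<Longrightarrow> \<exists>a s. \<forall>x\<in>I. norm (v x - rigid_motion a s (p x)) \<le> B"
    using near_rigidE[OF assms(1)] by blast
  define D where "D = \<bar>p 1 $ 2 - p 2 $ 2\<bar>"
  have "D > 0" using assms(3) by (simp add: D_def)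
  define L where "L = (\<Sum>i\<in>I. norm (p i - p 1))"
  have "norm (v i) \<le> B + (B + 2 * B / D * L)" if v: "v \<in> S" and i: "i \<in> I" for v i
  proof -
    obtain a s where as: "\<forall>x\<in>I. norm (v x - rigid_motion a s (p x)) \<le> B" using B[OF v] by blast
    have "v 1 = 0" "v 2 $ 1 = 0"
      using normalized[OF v] unfolding normalized_motion_def by (auto simp: vec2_eq_iff)
    have "1 \<in> I" "2 \<in> I" using two_le_n by auto
    then have "norm (v 1 - rigid_motion a s (p 1)) \<le> B" and t2: "norm (v 2 - rigid_motion a s (p 2)) \<le> B"
      using as by blast+
    then have t1: "norm (rigid_motion a s (p 1)) \<le> B" using \<open>v 1 = 0\<close> by simp
    have "\<bar>rigid_motion a s (p 1) $ 1\<bar> \<le> B" "\<bar>rigid_motion a s (p 2) $ 1\<bar> \<le> B"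
      using component_le_norm_cart[of "rigid_motion a s (p 1)" 1] t1
        component_le_norm_cart[of "v 2 - rigid_motion a s (p 2)" 1] t2 \<open>v 2 $ 1 = 0\<close> by auto
    then have "\<bar>s\<bar> * D \<le> 2 * B"
      using abs_rotation_le_first_coordinate[of s "p 1" "p 2" a] unfolding D_def by linarith
    then have "\<bar>s\<bar> \<le> 2 * B / D" using \<open>D > 0\<close> by (simp add: le_divide_eq)
    moreover have "norm (p i - p 1) \<le> L" unfolding L_def using i by (intro member_le_sum) auto
    ultimately have "\<bar>s\<bar> * norm (p i - p 1) \<le> 2 * B / D * L"
      using \<open>0 \<le> B\<close> \<open>D > 0\<close> by (intro mult_mono) auto
    then have "norm (rigid_motion a s (p i)) \<le> B + 2 * B / D * L"
      using norm_rigid_motion_le_shift[of a s "p i" "p 1"] t1 by linarith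
    moreover have "norm (v i) \<le> norm (v i - rigid_motion a s (p i)) + norm (rigid_motion a s (p i))"
      using norm_triangle_ineq[of "v i - rigid_motion a s (p i)" "rigid_motion a s (p i)"] by simp
    ultimately show ?thesis using as i by fastforce
  qed
  then show ?thesis unfolding motions_bounded_def by blast
qed

section \<open>Stretch bounds from the hull\<close>

lemma stretch_ge_in_X:
  assumes "v \<in> X n p f" "i \<in> I" "j \<in> I" "i \<noteq> j"
  shows "f (min i j) (max i j) \<le> stretch v i j"
proof -
  have le: "f i' j' \<le> stretch v i' j'" if "i' \<in> I" "j' \<in> I" "i' < j'" for i' j'
    using assms(1) that unfolding X_def Xbar_def stretch_def by blast
  consider "i < j" | "j < i" using assms(4) by linarith
  then show ?thesis
  proof cases
    case 1
    then show ?thesis using le[of i j] assms(2,3) by (simp add: min_def max_def)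
  next
    case 2
    then show ?thesis using le[of j i] assms(2,3) stretch_commute[of v j i] by (simp add: min_def max_def)
  qed
qed

lemma stretch_eq_in_X:
  assumes "v \<in> X n p f" "ccw_edge i j"
  shows "stretch v i j = f (min i j) (max i j)"
proof -
  have "hull_edge n p i j" "hull_edge n p j i" "i \<noteq> j"
    using ccw_edge_hull_edge[OF assms(2)] hull_edge_commute assms(2) unfolding ccw_edge_def by auto
  moreover have eq: "stretch v i' j' = f i' j'" if "i' < j'" "hull_edge n p i' j'" for i' j'
    using assms(1) that unfolding X_def stretch_def by blast
  ultimately consider "i < j" | "j < i" by linarith
  then show ?thesis
  proof cases
    case 1
    then show ?thesis using eq[of i j] \<open>hull_edge n p i j\<close> by (simp add: min_def max_def)
  next
    case 2
    then show ?thesis using eq[of j i] \<open>hull_edge n p j i\<close> stretch_commute[of v j i]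
      by (simp add: min_def max_def)
  qed
qed

definition angular_rate :: "(nat \<Rightarrow> real^2) \<Rightarrow> nat \<Rightarrow> nat \<Rightarrow> real" where
  "angular_rate v i j = cross2 (p j - p i) (v j - v i) / ((p j - p i) \<bullet> (p j - p i))"

lemma angular_rate_commute: "angular_rate v i j = angular_rate v j i"
proof -
  have "cross2 (p j - p i) (v j - v i) = cross2 (p i - p j) (v i - v j)"
    by (simp add: cross2_def algebra_simps)
  moreover have "(p j - p i) \<bullet> (p j - p i) = (p i - p j) \<bullet> (p i - p j)"
    by (metis inner_minus_left inner_minus_right minus_diff_eq)
  ultimately show ?thesis unfolding angular_rate_def by simp
qed

lemma sum_succ_diff_eq_0: "(\<Sum>k\<in>vertices. g (succ k) - g k) = (0::real)"
  using sum.reindex_bij_betw[OF bij_betw_succ, of g] by (simp add: sum_subtractf)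

definition turn :: "nat \<Rightarrow> real" where
  "turn k = cross2 (p k - p (succ k)) (p (succ (succ k)) - p (succ k))"

lemma turn_neg:
  assumes "3 \<le> n" "k \<in> vertices"
  shows "turn k < 0"
proof -
  have "ccw_edge (succ k) (succ (succ k))" using ccw_edge_succ succ_in_vertices assms(2) by blast
  moreover have "k \<in> I" "k \<noteq> succ k" "k \<noteq> succ (succ k)"
    using assms(2) vertices_subset succ_neq[OF assms(2)] succ_succ_neq[OF assms] by auto
  ultimately have "cross2 (p (succ (succ k)) - p (succ k)) (p k - p (succ k)) > 0"
    unfolding ccw_edge_def by auto
  then show ?thesis unfolding turn_def by (simp add: cross2_def algebra_simps)
qed

lemma angular_rate_step:
  assumes "k \<in> vertices"
  shows "\<exists>c. \<forall>v\<in>X n p f.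
    turn k * (angular_rate v (succ k) (succ (succ k)) - angular_rate v (succ k) k)
      = stretch v k (succ (succ k)) + c"
proof -
  let ?m = "succ k" and ?j = "succ (succ k)"
  define a b where "a = p k - p ?m" and "b = p ?j - p ?m"
  have vert: "?m \<in> vertices" "?j \<in> vertices" using assms succ_in_vertices by auto
  have "a \<noteq> 0" "b \<noteq> 0"
    using p_neq succ_neq assms vert vertices_subset unfolding a_def b_def by (metis subsetD right_minus_eq)+
  define c where "c = ((a \<bullet> b) / (a \<bullet> a) - 1) * f (min k ?m) (max k ?m)
    + ((a \<bullet> b) / (b \<bullet> b) - 1) * f (min ?m ?j) (max ?m ?j)"
  have "turn k * (angular_rate v ?m ?j - angular_rate v ?m k) = stretch v k ?j + c"
    if v: "v \<in> X n p f" for v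
  proof -
    have "stretch v k ?m = f (min k ?m) (max k ?m)" "stretch v ?j ?m = f (min ?m ?j) (max ?m ?j)"
      using stretch_eq_in_X[OF v] ccw_edge_succ assms vert stretch_commute by metis+
    then show ?thesis
      using cross2_angle_identity[OF \<open>a \<noteq> 0\<close> \<open>b \<noteq> 0\<close>, of "v ?j - v ?m" "v k - v ?m"]
      unfolding turn_def angular_rate_def stretch_def c_def a_def b_def by (simp add: algebra_simps)
  qed
  then show ?thesis by blast
qed

text \<open>The angular rates of the hull edges telescope around the hull cycle.\<close>
lemma diagonal_stretch_weighted_sum:
  assumes "3 \<le> n"
  obtains w Z where "\<And>k. k \<in> vertices \<Longrightarrow> w k > 0"
    and "\<And>v. v \<in> X n p f \<Longrightarrow> (\<Sum>k\<in>vertices. w k * stretch v k (succ (succ k))) = Z"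
proof -
  have "\<forall>k\<in>vertices. \<exists>c. \<forall>v\<in>X n p f.
      turn k * (angular_rate v (succ k) (succ (succ k)) - angular_rate v (succ k) k)
        = stretch v k (succ (succ k)) + c"
    by (intro ballI angular_rate_step)
  from bchoice[OF this] obtain c where "\<forall>k\<in>vertices. \<forall>v\<in>X n p f.
      turn k * (angular_rate v (succ k) (succ (succ k)) - angular_rate v (succ k) k)
        = stretch v k (succ (succ k)) + c k"
    by (elim exE)
  then have c: "\<And>k v. k \<in> vertices \<Longrightarrow> v \<in> X n p f \<Longrightarrow>
      turn k * (angular_rate v (succ k) (succ (succ k)) - angular_rate v (succ k) k)
        = stretch v k (succ (succ k)) + c k"
    by blast
  have "(\<Sum>k\<in>vertices. (- 1 / turn k) * stretch v k (succ (succ k))) = (\<Sum>k\<in>vertices. c k / turn k)"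
    if v: "v \<in> X n p f" for v
  proof -
    have "0 = (\<Sum>k\<in>vertices. angular_rate v (succ k) (succ (succ k)) - angular_rate v (succ k) k)"
      using sum_succ_diff_eq_0[of "\<lambda>k. angular_rate v k (succ k)"] angular_rate_commute by simp
    also have "\<dots> = (\<Sum>k\<in>vertices. (stretch v k (succ (succ k)) + c k) / turn k)"
    proof (rule sum.cong[OF refl])
      fix k assume k: "k \<in> vertices"
      have "turn k \<noteq> 0" using turn_neg[OF assms k] by simp
      then show "angular_rate v (succ k) (succ (succ k)) - angular_rate v (succ k) k
          = (stretch v k (succ (succ k)) + c k) / turn k"
        using c[OF k v] by (simp add: eq_divide_eq mult.commute)
    qed
    finally show ?thesis by (simp add: add_divide_distrib sum.distrib sum_negf)
  qed
  moreover have "- 1 / turn k > 0" if "k \<in> vertices" for k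
    using turn_neg[OF assms that] by simp
  ultimately show ?thesis using that[of "\<lambda>k. - 1 / turn k"] by blast
qed

lemma diagonal_stretch_bounded_above:
  assumes "3 \<le> n" "k0 \<in> vertices"
  shows "\<exists>U. \<forall>v\<in>X n p f. stretch v k0 (succ (succ k0)) \<le> U"
proof -
  obtain w Z where w: "\<And>k. k \<in> vertices \<Longrightarrow> w k > 0"
    and sum: "\<And>v. v \<in> X n p f \<Longrightarrow> (\<Sum>k\<in>vertices. w k * stretch v k (succ (succ k))) = Z"
    using diagonal_stretch_weighted_sum[OF assms(1)] by blast
  define L where "L = (\<Sum>k\<in>vertices - {k0}. w k * f (min k (succ (succ k))) (max k (succ (succ k))))"
  have "stretch v k0 (succ (succ k0)) \<le> (Z - L) / w k0" if v: "v \<in> X n p f" for v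
  proof -
    have "L \<le> (\<Sum>k\<in>vertices - {k0}. w k * stretch v k (succ (succ k)))"
      unfolding L_def
    proof (rule sum_mono)
      fix k assume k: "k \<in> vertices - {k0}"
      then have "k \<in> vertices" by simp
      then have "k \<in> I" "succ (succ k) \<in> I" "k \<noteq> succ (succ k)"
        using succ_in_vertices vertices_subset succ_succ_neq[OF assms(1)] by (metis subsetD)+
      then show "w k * f (min k (succ (succ k))) (max k (succ (succ k))) \<le> w k * stretch v k (succ (succ k))"
        using stretch_ge_in_X[OF v] w k by (simp add: mult_left_mono less_imp_le)
    qed
    moreover have "Z = w k0 * stretch v k0 (succ (succ k0)) + (\<Sum>k\<in>vertices - {k0}. w k * stretch v k (succ (succ k)))"
      using sum[OF v] sum.remove[OF finite_vertices assms(2), of "\<lambda>k. w k * stretch v k (succ (succ k))"]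
      by simp
    ultimately show ?thesis using w[OF assms(2)] by (simp add: le_divide_eq mult.commute)
  qed
  then show ?thesis by blast
qed

lemma near_rigid_hull_triangle:
  assumes "3 \<le> n" "k \<in> vertices"
  shows "near_rigid (X n p f) {k, succ k, succ (succ k)}"
proof -
  let ?m = "succ k" and ?j = "succ (succ k)"
  have vert: "?m \<in> vertices" "?j \<in> vertices" using assms(2) succ_in_vertices by auto
  have idx: "k \<in> I" "?m \<in> I" "?j \<in> I" using assms(2) vert vertices_subset by auto
  have distinct: "k \<noteq> ?m" "?m \<noteq> ?j" "k \<noteq> ?j"
    using succ_neq[OF assms(2)] succ_neq[OF vert(1)] succ_succ_neq[OF assms] by auto
  have edges: "stretch v k ?m = f (min k ?m) (max k ?m)" "stretch v ?m ?j = f (min ?m ?j) (max ?m ?j)"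
    if "v \<in> X n p f" for v
    using stretch_eq_in_X[OF that] ccw_edge_succ assms(2) vert(1) by auto
  obtain U where U: "\<And>v. v \<in> X n p f \<Longrightarrow> stretch v k ?j \<le> U"
    using diagonal_stretch_bounded_above[OF assms] by blast
  define C where "C = \<bar>f (min k ?m) (max k ?m)\<bar> + \<bar>f (min ?m ?j) (max ?m ?j)\<bar>
    + \<bar>f (min k ?j) (max k ?j)\<bar> + \<bar>U\<bar>"
  have bounded: "\<bar>stretch v ?m ?j\<bar> \<le> C" "\<bar>stretch v k ?m\<bar> \<le> C" "\<bar>stretch v k ?j\<bar> \<le> C"
    if v: "v \<in> X n p f" for v
    using edges[OF v] U[OF v] stretch_ge_in_X[OF v idx(1,3) distinct(3)] unfolding C_def
    by (smt (verit))+
  have "near_rigid (X n p f) {?m, ?j}"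
    using near_rigid_pair idx distinct bounded(1) by blast
  then have "near_rigid (X n p f) (insert k {?m, ?j})"
    using near_rigid_insert[of "X n p f" "{?m, ?j}" ?m ?j k C] idx distinct bounded by auto
  then show ?thesis by simp
qed

lemma near_rigid_vertices:
  assumes "3 \<le> n"
  shows "near_rigid (X n p f) vertices"
proof -
  obtain k0 where k0: "k0 \<in> vertices" using vertices_nonempty by blast
  define T where "T l = {(succ ^^ l) k0, (succ ^^ Suc l) k0, (succ ^^ Suc (Suc l)) k0}" for l
  define \<T> where "\<T> m = (\<Union>l\<le>m. T l)" for m
  have iter: "(succ ^^ l) k0 \<in> vertices" for l
    using succ_orbit_subset[OF k0] unfolding succ_orbit_def by blast
  have triangle: "near_rigid (X n p f) (T l)" for l
    using near_rigid_hull_triangle[OF assms iter[of l]] by (simp add: T_def)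
  have chain: "near_rigid (X n p f) (\<T> m)" for m
  proof (induction m)
    case 0
    then show ?case using triangle[of 0] by (simp add: \<T>_def)
  next
    case (Suc m)
    let ?i = "(succ ^^ Suc m) k0"
    have "?i \<in> \<T> m \<inter> T (Suc m)" "succ ?i \<in> \<T> m \<inter> T (Suc m)"
      unfolding \<T>_def T_def by auto
    moreover have "p ?i \<noteq> p (succ ?i)"
      using p_neq succ_neq iter[of "Suc m"] succ_in_vertices vertices_subset by (metis subsetD)
    moreover have "finite (T (Suc m))" by (simp add: T_def)
    ultimately have "near_rigid (X n p f) (\<T> m \<union> T (Suc m))"
      using near_rigid_Un[OF Suc.IH triangle] by blast
    then show ?case by (simp add: \<T>_def atMost_Suc Un_commute)
  qed
  have "\<forall>e\<in>vertices. \<exists>l. (succ ^^ l) k0 = e"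
    using succ_orbit_eq_vertices[OF k0] unfolding succ_orbit_def by (metis rangeE)
  then obtain l where l: "\<And>e. e \<in> vertices \<Longrightarrow> (succ ^^ l e) k0 = e" by metis
  have "vertices \<subseteq> \<T> (Max (l ` vertices))"
  proof
    fix e assume e: "e \<in> vertices"
    then have "l e \<le> Max (l ` vertices)" using finite_vertices by simp
    moreover have "e \<in> T (l e)" using l[OF e] unfolding T_def by force
    ultimately show "e \<in> \<T> (Max (l ` vertices))" unfolding \<T>_def by blast
  qed
  then show ?thesis using near_rigid_mono[OF chain] by blast
qed

lemma near_rigid_all_points:
  assumes "3 \<le> n"
  shows "near_rigid (X n p f) I"
proof -
  have "near_rigid (X n p f) (vertices \<union> Q)" if "finite Q" "Q \<subseteq> I - vertices" for Q
    using that
  proof (induction rule: finite_subset_induct')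
    case empty
    then show ?case using near_rigid_vertices[OF assms] by simp
  next
    case (insert q Q)
    have q: "q \<in> I" "q \<notin> vertices" using insert.hyps(2) by auto
    have "near_rigid (X n p f) (insert q (vertices \<union> Q))"
    proof (rule near_rigid_insert_enclosed)
      show "near_rigid (X n p f) (vertices \<union> Q)" by (rule insert.IH)
      show "finite (vertices \<union> Q)" using finite_vertices insert.hyps(1) by blast
      show "\<exists>i\<in>vertices \<union> Q. (p i - p q) \<bullet> u > 0" if "u \<noteq> 0" for u
        using ex_vertex_maximizer[OF that] q by (metis Diff_iff UnI1 inner_diff_left diff_gt_0_iff_gt)
      show "f (min q i) (max q i) \<le> stretch v q i" if "v \<in> X n p f" "i \<in> vertices \<union> Q" for v i
        using stretch_ge_in_X[OF that(1)] that(2) q insert.hyps(3,4) vertices_subset by blast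
    qed
    then show ?case by simp
  qed
  from this[of "I - vertices"] show ?thesis using vertices_subset by (simp add: Un_absorb1)
qed

end

theorem lemma3p4:
  fixes n :: nat and p :: "nat \<Rightarrow> real^2" and f :: "nat \<Rightarrow> nat \<Rightarrow> real"
  assumes "n \<ge> 2"
    and "general_position n p"
    and "p 1 $ 2 \<noteq> p 2 $ 2"
  shows "motions_bounded n (X n p f)"
proof -
  interpret planar_config n p using assms(1,2) by unfold_locales
  have "near_rigid (X n p f) I"
  proof (cases "n = 2")
    case True
    then have "I = {1, 2}" by auto
    then have "ccw_edge 1 2" unfolding ccw_edge_def by auto
    then have "\<bar>stretch v 1 2\<bar> \<le> \<bar>f 1 2\<bar>" if "v \<in> X n p f" for v
      using stretch_eq_in_X[OF that \<open>ccw_edge 1 2\<close>] by (simp add: min_def max_def)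
    then show ?thesis using near_rigid_pair[of 1 2 "X n p f" "\<bar>f 1 2\<bar>"] \<open>I = {1, 2}\<close> assms(1) by simp
  next
    case False
    then show ?thesis using near_rigid_all_points assms(1) by simp
  qed
  moreover have "normalized_motion n v" if "v \<in> X n p f" for v
    using that unfolding X_def Xbar_def by blast
  ultimately show ?thesis using motions_bounded_if_near_rigid assms(3) by blast
qed

end
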